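(* Let $\mathcal{P}\subset\mathbb{R}^d$ be a finite set of item vectors, $\bm{q}\in\mathbb{R}^d$, $k>1$ an integer, $\lambda\in[0,1]$, $\mu>0$, and assume $\langle\bm{x},\bm{y}\rangle\ge0$ for all $\bm{x},\bm{y}\in\mathcal{P}\cup\{\bm{q}\}$. Let $\mathcal{N}\subseteq\mathcal{P}$ be nonempty with center $\bm{c}=\frac{1}{|\mathcal{N}|}\sum_{\bm{p}\in\mathcal{N}}\bm{p}$, and for $\bm{p}\in\mathcal{N}$ let $r_{\bm{p}}=\|\bm{p}-\bm{c}\|$. Then for every $\bm{p}\in\mathcal{N}$, every $\mathcal{S}\subseteq\mathcal{P}$, and $\Delta_f$ equal to either $\Delta_{f_{avg}}$ or $\Delta_{f_{max}}$, $$\Delta_f(\bm{p},\mathcal{S})\le\tfrac{\lambda}{k}\big(\langle\bm{q},\bm{c}\rangle+r_{\bm{p}}\|\bm{q}\|\big).$$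
   Context: $\Delta_{f_{avg}}(\bm{p},\mathcal{S}) = \frac{\lambda}{k}\langle\bm{p},\bm{q}\rangle - \frac{2\mu(1-\lambda)}{k(k-1)}\sum_{\bm{p}'\in\mathcal{S}}\langle\bm{p},\bm{p}'\rangle$ and $\Delta_{f_{max}}(\bm{p},\mathcal{S}) = \frac{\lambda}{k}\langle\bm{p},\bm{q}\rangle - \mu(1-\lambda)\big(\max_{\bm{p}_x\ne\bm{p}_y\in\mathcal{S}\cup\{\bm{p}\}}\langle\bm{p}_x,\bm{p}_y\rangle - \max_{\bm{p}_x\ne\bm{p}_y\in\mathcal{S}}\langle\bm{p}_x,\bm{p}_y\rangle\big)$, where a maximum over an empty collection of pairs is taken to be $0$. The set $\mathcal{N}$ plays the role of a leaf node of a ball tree (BC-Tree) storing its centroid and, for each item, its distance to the centroid. *)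

theory Defs
  imports "HOL-Analysis.Analysis"
begin

definition max_pair_inner :: "'a::real_inner set \<Rightarrow> real" where
  "max_pair_inner T =
     (if \<exists>x\<in>T. \<exists>y\<in>T. x \<noteq> y
      then Max {inner x y | x y. x \<in> T \<and> y \<in> T \<and> x \<noteq> y}
      else 0)"

definition delta_avg :: "real \<Rightarrow> real \<Rightarrow> nat \<Rightarrow> 'a::real_inner \<Rightarrow> 'a \<Rightarrow> 'a set \<Rightarrow> real" where
  "delta_avg lam mu k q p S =
     lam / real k * inner p q
     - 2 * mu * (1 - lam) / (real k * (real k - 1)) * (\<Sum>p'\<in>S. inner p p')"

definition delta_max :: "real \<Rightarrow> real \<Rightarrow> nat \<Rightarrow> 'a::real_inner \<Rightarrow> 'a \<Rightarrow> 'a set \<Rightarrow> real" where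
  "delta_max lam mu k q p S =
     lam / real k * inner p q
     - mu * (1 - lam) * (max_pair_inner (S \<union> {p}) - max_pair_inner S)"

end

theory Submission
  imports Defs
begin

text \<open>Both marginal gains are the relevance term \<open>\<lambda>/k \<langle>p,q\<rangle>\<close> minus a diversity penalty
  that is nonnegative when all inner products are: for \<open>f\<^sub>a\<^sub>v\<^sub>g\<close> it is a nonnegative
  multiple of a sum of inner products, for \<open>f\<^sub>m\<^sub>a\<^sub>x\<close> the maximal pairwise inner product can
  only grow when \<open>p\<close> is added. Writing \<open>p = c + (p - c)\<close> and applying Cauchy-Schwarz to
  \<open>\<langle>q, p - c\<rangle>\<close> bounds the relevance term by \<open>\<lambda>/k (\<langle>q,c\<rangle> + r\<^sub>p \<parallel>q\<parallel>)\<close>.\<close>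

lemma finite_pair_inners:
  assumes "finite T"
  shows "finite {inner x y | x y. x \<in> T \<and> y \<in> T \<and> x \<noteq> y}"
proof (rule finite_subset)
  show "{inner x y | x y. x \<in> T \<and> y \<in> T \<and> x \<noteq> y} \<subseteq> (\<lambda>(x, y). inner x y) ` (T \<times> T)"
    by auto
  show "finite ((\<lambda>(x, y). inner x y) ` (T \<times> T))"
    using assms by simp
qed

lemma max_pair_inner_nonneg:
  assumes "finite T" and "\<forall>x\<in>T. \<forall>y\<in>T. x \<noteq> y \<longrightarrow> 0 \<le> inner x y"
  shows "0 \<le> max_pair_inner T"
proof (cases "\<exists>x\<in>T. \<exists>y\<in>T. x \<noteq> y")
  case True
  then obtain x y where xy: "x \<in> T" "y \<in> T" "x \<noteq> y" by blast
  then have "inner x y \<le> Max {inner x y | x y. x \<in> T \<and> y \<in> T \<and> x \<noteq> y}"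
    using finite_pair_inners[OF assms(1)] by (intro Max_ge) blast+
  moreover have "0 \<le> inner x y"
    using xy assms(2) by blast
  ultimately show ?thesis
    using True unfolding max_pair_inner_def by simp
qed (simp add: max_pair_inner_def)

lemma max_pair_inner_mono:
  assumes "finite T" and "S \<subseteq> T"
    and "\<forall>x\<in>T. \<forall>y\<in>T. x \<noteq> y \<longrightarrow> 0 \<le> inner x y"
  shows "max_pair_inner S \<le> max_pair_inner T"
proof (cases "\<exists>x\<in>S. \<exists>y\<in>S. x \<noteq> y")
  case True
  let ?pairs = "\<lambda>U. {inner x y | x y. x \<in> U \<and> y \<in> U \<and> x \<noteq> y}"
  have "Max (?pairs S) \<le> Max (?pairs T)"
    using True assms(2) finite_pair_inners[OF assms(1)] by (intro Max_mono) blast+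
  moreover have "\<exists>x\<in>T. \<exists>y\<in>T. x \<noteq> y"
    using True assms(2) by blast
  ultimately show ?thesis
    using True unfolding max_pair_inner_def by simp
next
  case False
  then show ?thesis
    using max_pair_inner_nonneg[OF assms(1,3)] unfolding max_pair_inner_def by simp
qed

text \<open>No hypothesis on \<open>k\<close> is needed: \<open>k (k - 1) \<ge> 0\<close> for every natural \<open>k\<close>, and
  division by \<open>0\<close> gives \<open>0\<close>.\<close>

lemma delta_avg_le_relevance:
  assumes "0 \<le> lam" "lam \<le> 1" "0 \<le> mu"
    and "\<forall>p'\<in>S. 0 \<le> inner p p'"
  shows "delta_avg lam mu k q p S \<le> lam / real k * inner p q"
proof -
  have "0 \<le> real k * (real k - 1)"
    by (cases k) auto
  then have "0 \<le> 2 * mu * (1 - lam) / (real k * (real k - 1))"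
    using assms(2,3) by simp
  moreover have "0 \<le> (\<Sum>p'\<in>S. inner p p')"
    using assms(4) by (simp add: sum_nonneg)
  ultimately have "0 \<le> 2 * mu * (1 - lam) / (real k * (real k - 1)) * (\<Sum>p'\<in>S. inner p p')"
    by (rule mult_nonneg_nonneg)
  then show ?thesis
    unfolding delta_avg_def by linarith
qed

lemma delta_max_le_relevance:
  assumes "lam \<le> 1" "0 \<le> mu" and "finite S"
    and "\<forall>x\<in>S \<union> {p}. \<forall>y\<in>S \<union> {p}. x \<noteq> y \<longrightarrow> 0 \<le> inner x y"
  shows "delta_max lam mu k q p S \<le> lam / real k * inner p q"
proof -
  have "max_pair_inner S \<le> max_pair_inner (S \<union> {p})"
    using assms(3,4) by (intro max_pair_inner_mono) auto
  moreover have "0 \<le> mu * (1 - lam)"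
    using assms(1,2) by simp
  ultimately show ?thesis
    unfolding delta_max_def by (simp add: mult_nonneg_nonneg)
qed

lemma inner_le_inner_centre_plus_radius:
  fixes p q c :: "'a::real_inner"
  shows "inner p q \<le> inner q c + norm (p - c) * norm q"
proof -
  have "inner p q = inner q c + inner q (p - c)"
    by (simp add: inner_diff_right inner_commute)
  also have "\<dots> \<le> inner q c + norm (p - c) * norm q"
    using Cauchy_Schwarz_ineq2[of q "p - c"] by (simp add: mult.commute)
  finally show ?thesis .
qed

theorem corollary1:
  fixes P N S :: "'a::euclidean_space set" and q p :: 'a
    and k :: nat and lam mu :: real
    and Delta :: "real \<Rightarrow> real \<Rightarrow> nat \<Rightarrow> 'a \<Rightarrow> 'a \<Rightarrow> 'a set \<Rightarrow> real"
  assumes "finite P"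
    and "k > 1"
    and "0 \<le> lam" "lam \<le> 1"
    and "mu > 0"
    and "\<forall>x\<in>P \<union> {q}. \<forall>y\<in>P \<union> {q}. inner x y \<ge> 0"
    and "N \<subseteq> P" "N \<noteq> {}"
    and "p \<in> N"
    and "S \<subseteq> P"
    and "Delta = delta_avg \<or> Delta = delta_max"
  shows "let c = (1 / real (card N)) *\<^sub>R (\<Sum>x\<in>N. x);
             r = norm (p - c)
         in Delta lam mu k q p S \<le> lam / real k * (inner q c + r * norm q)"
proof -
  define c where "c = (1 / real (card N)) *\<^sub>R (\<Sum>x\<in>N. x)"
  have "finite S"
    using assms(1,10) finite_subset by blast
  have nonneg: "\<forall>x\<in>S \<union> {p}. \<forall>y\<in>S \<union> {p}. 0 \<le> inner x y"
    using assms(6-10) by blast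
  from assms(11) have "Delta lam mu k q p S \<le> lam / real k * inner p q"
  proof
    assume "Delta = delta_avg"
    then show ?thesis
      using nonneg assms(3-5) delta_avg_le_relevance[of lam mu S p k q] by simp
  next
    assume "Delta = delta_max"
    then show ?thesis
      using nonneg assms(4,5) \<open>finite S\<close> delta_max_le_relevance[of lam mu S p k q] by simp
  qed
  also have "\<dots> \<le> lam / real k * (inner q c + norm (p - c) * norm q)"
    using assms(3) by (intro mult_left_mono inner_le_inner_centre_plus_radius) simp_all
  finally show ?thesis
    unfolding c_def Let_def .
qed

end
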